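(* For every $n\ge1$, the Houghton group $\mathcal{H}_n$ is not co-Hopfian; that is, there is an injective homomorphism $\mathcal{H}_n\to\mathcal{H}_n$ that is not surjective.
   Context: Let $\mathbb{N}=\{1,2,3,\dots\}$, $\mathbb{Z}_n$ the integers modulo $n$, $R_n=\mathbb{Z}_n\times\mathbb{N}$. The Houghton group $\mathcal{H}_n$ is the group of permutations $\sigma$ of $R_n$ for which there exist $N\ge0$ and integers $t_i$ with $(i,k)\sigma=(i,k+t_i)$ for all $i\in\mathbb{Z}_n$, $k\ge N$ (right actions). A group is co-Hopfian if every injective endomorphism of it is an automorphism. *)

theory Defs
  imports "HOL-Algebra.Group"
begin

text \<open>R_n = Z_n x N, with Z_n represented by {0..<n} and N = {1,2,...}.\<close>
definition Rn :: "nat \<Rightarrow> (nat \<times> nat) set" where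
  "Rn n = {0..<n} \<times> {1..}"

text \<open>Elements of the Houghton group: permutations of R_n (extended by the identity
outside R_n, so that they are determined by their action on R_n) that are eventually
translations on each ray.\<close>
definition houghton_carrier :: "nat \<Rightarrow> (nat \<times> nat \<Rightarrow> nat \<times> nat) set" where
  "houghton_carrier n = {\<sigma>. bij_betw \<sigma> (Rn n) (Rn n) \<and> (\<forall>x. x \<notin> Rn n \<longrightarrow> \<sigma> x = x) \<and>
     (\<exists>N::nat. \<exists>t::nat \<Rightarrow> int. \<forall>i<n. \<forall>k\<ge>N. k \<ge> 1 \<longrightarrow>
        fst (\<sigma> (i, k)) = i \<and> int (snd (\<sigma> (i, k))) = int k + t i)}"

text \<open>Right actions: the product sigma tau means first sigma, then tau.\<close>
definition houghton :: "nat \<Rightarrow> (nat \<times> nat \<Rightarrow> nat \<times> nat) monoid" where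
  "houghton n = \<lparr>carrier = houghton_carrier n, mult = (\<lambda>\<sigma> \<tau>. \<tau> \<circ> \<sigma>), one = id\<rparr>"

end

theory Submission
  imports Defs "HOL-Combinatorics.Transposition"
begin

text \<open>Let \<open>s(i,k) = (i,k+1)\<close> be the shift of all rays by one step. Conjugating by \<open>s\<close> sends
  \<open>\<sigma> \<in> \<H>\<^sub>n\<close> to the permutation acting as \<open>s \<sigma> s\<^sup>-\<^sup>1\<close> on the image of \<open>s\<close> and fixing the first point
  \<open>(i,1)\<close> of every ray. This is an injective endomorphism of \<open>\<H>\<^sub>n\<close>, still eventually a translation
  on each ray, but its image misses the transposition of \<open>(0,1)\<close> and \<open>(0,2)\<close>.\<close>

definition embed_perm :: "('a \<Rightarrow> 'a) \<Rightarrow> 'a set \<Rightarrow> ('a \<Rightarrow> 'a) \<Rightarrow> 'a \<Rightarrow> 'a" where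
  "embed_perm f A \<sigma> x = (if x \<in> f ` A then f (\<sigma> (the_inv_into A f x)) else x)"

lemma embed_perm_image:
  assumes "inj_on f A" "a \<in> A"
  shows "embed_perm f A \<sigma> (f a) = f (\<sigma> a)"
  using assms by (simp add: embed_perm_def the_inv_into_f_f)

lemma embed_perm_outside: "x \<notin> f ` A \<Longrightarrow> embed_perm f A \<sigma> x = x"
  by (simp add: embed_perm_def)

lemma bij_betw_embed_perm:
  assumes f: "inj_on f A" "f ` A \<subseteq> A" and \<sigma>: "bij_betw \<sigma> A A"
  shows "bij_betw (embed_perm f A \<sigma>) A A"
proof -
  have f_bij: "bij_betw f A (f ` A)"
    using f by (simp add: inj_on_imp_bij_betw)
  have "bij_betw (f \<circ> \<sigma> \<circ> the_inv_into A f) (f ` A) (f ` A)"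
    using f_bij \<sigma> bij_betw_the_inv_into[OF f_bij] by (blast intro: bij_betw_trans)
  then have on_image: "bij_betw (embed_perm f A \<sigma>) (f ` A) (f ` A)"
    by (rule bij_betw_cong[THEN iffD1, rotated]) (simp add: embed_perm_def)
  have off_image: "bij_betw (embed_perm f A \<sigma>) (A - f ` A) (A - f ` A)"
    by (rule bij_betw_cong[THEN iffD1, OF _ bij_betw_id]) (simp add: embed_perm_outside)
  have "A = f ` A \<union> (A - f ` A)"
    using f by blast
  then show ?thesis
    using bij_betw_disjoint_Un[OF on_image off_image] by (metis Diff_disjoint)
qed

lemma embed_perm_comp:
  assumes "inj_on f A" "\<sigma> ` A \<subseteq> A"
  shows "embed_perm f A (\<tau> \<circ> \<sigma>) = embed_perm f A \<tau> \<circ> embed_perm f A \<sigma>"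
proof
  fix x
  show "embed_perm f A (\<tau> \<circ> \<sigma>) x = (embed_perm f A \<tau> \<circ> embed_perm f A \<sigma>) x"
  proof (cases "x \<in> f ` A")
    case True
    then obtain a where "a \<in> A" "x = f a" by blast
    then show ?thesis
      using assms by (auto simp: embed_perm_image)
  qed (simp add: embed_perm_outside)
qed

lemma embed_perm_eqD:
  assumes f: "inj_on f A" and maps: "\<sigma> ` A \<subseteq> A" "\<tau> ` A \<subseteq> A"
    and eq: "embed_perm f A \<sigma> = embed_perm f A \<tau>" and a: "a \<in> A"
  shows "\<sigma> a = \<tau> a"
proof -
  have "f (\<sigma> a) = f (\<tau> a)"
    using f a eq by (metis embed_perm_image)
  then show ?thesis
    using f maps a by (blast dest: inj_onD)
qed

definition ray_shift :: "nat \<times> nat \<Rightarrow> nat \<times> nat" where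
  "ray_shift x = (fst x, Suc (snd x))"

abbreviation houghton_shift :: "nat \<Rightarrow> (nat \<times> nat \<Rightarrow> nat \<times> nat) \<Rightarrow> nat \<times> nat \<Rightarrow> nat \<times> nat" where
  "houghton_shift n \<equiv> embed_perm ray_shift (Rn n)"

lemma mem_Rn_iff: "(i, k) \<in> Rn n \<longleftrightarrow> i < n \<and> 1 \<le> k"
  by (simp add: Rn_def)

lemma inj_on_ray_shift: "inj_on ray_shift A"
  by (rule inj_onI) (simp add: ray_shift_def prod_eq_iff)

lemma ray_shift_Rn_subset: "ray_shift ` Rn n \<subseteq> Rn n"
  by (auto simp: ray_shift_def Rn_def)

lemma ray_start_notin_ray_shift_Rn: "(i, 1) \<notin> ray_shift ` Rn n"
  by (auto simp: ray_shift_def Rn_def)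

lemma houghton_carrier_bij_betw: "\<sigma> \<in> houghton_carrier n \<Longrightarrow> bij_betw \<sigma> (Rn n) (Rn n)"
  by (simp add: houghton_carrier_def)

lemma houghton_carrier_fixes: "\<sigma> \<in> houghton_carrier n \<Longrightarrow> x \<notin> Rn n \<Longrightarrow> \<sigma> x = x"
  unfolding houghton_carrier_def by blast

lemma houghton_carrier_maps_Rn: "\<sigma> \<in> houghton_carrier n \<Longrightarrow> \<sigma> ` Rn n \<subseteq> Rn n"
  using houghton_carrier_bij_betw bij_betw_imp_surj_on by blast

lemma houghton_carrier_eqI:
  assumes "\<sigma> \<in> houghton_carrier n" "\<tau> \<in> houghton_carrier n" "\<And>x. x \<in> Rn n \<Longrightarrow> \<sigma> x = \<tau> x"
  shows "\<sigma> = \<tau>"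
proof
  fix x
  show "\<sigma> x = \<tau> x"
    using assms houghton_carrier_fixes by (cases "x \<in> Rn n") metis+
qed

lemma houghton_shift_in_carrier:
  assumes \<sigma>: "\<sigma> \<in> houghton_carrier n"
  shows "houghton_shift n \<sigma> \<in> houghton_carrier n"
proof -
  obtain N and t :: "nat \<Rightarrow> int" where trans: "\<And>i k. i < n \<Longrightarrow> N \<le> k \<Longrightarrow> 1 \<le> k \<Longrightarrow>
      fst (\<sigma> (i, k)) = i \<and> int (snd (\<sigma> (i, k))) = int k + t i"
    using \<sigma> unfolding houghton_carrier_def by blast
  have "fst (houghton_shift n \<sigma> (i, k)) = i \<and> int (snd (houghton_shift n \<sigma> (i, k))) = int k + t i"
    if "i < n" "N + 2 \<le> k" for i k
  proof -
    have "(i, k - 1) \<in> Rn n" "(i, k) = ray_shift (i, k - 1)"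
      using that by (auto simp: mem_Rn_iff ray_shift_def)
    then have "houghton_shift n \<sigma> (i, k) = ray_shift (\<sigma> (i, k - 1))"
      by (metis embed_perm_image inj_on_ray_shift)
    then show ?thesis
      using trans[of i "k - 1"] that by (simp add: ray_shift_def)
  qed
  moreover have "houghton_shift n \<sigma> x = x" if "x \<notin> Rn n" for x
    using that ray_shift_Rn_subset by (blast intro: embed_perm_outside)
  moreover have "bij_betw (houghton_shift n \<sigma>) (Rn n) (Rn n)"
    using \<sigma> by (simp add: bij_betw_embed_perm inj_on_ray_shift ray_shift_Rn_subset
        houghton_carrier_bij_betw)
  ultimately show ?thesis
    unfolding houghton_carrier_def by (intro CollectI conjI exI[of _ "N + 2"] exI[of _ t]) auto
qed

lemma houghton_shift_hom: "houghton_shift n \<in> hom (houghton n) (houghton n)"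
proof (rule homI)
  fix \<sigma> \<tau>
  assume "\<sigma> \<in> carrier (houghton n)"
  then show "houghton_shift n \<sigma> \<in> carrier (houghton n)"
    by (simp add: houghton_def houghton_shift_in_carrier)
  assume "\<tau> \<in> carrier (houghton n)"
  with \<open>\<sigma> \<in> carrier (houghton n)\<close>
  show "houghton_shift n (\<sigma> \<otimes>\<^bsub>houghton n\<^esub> \<tau>) = houghton_shift n \<sigma> \<otimes>\<^bsub>houghton n\<^esub> houghton_shift n \<tau>"
    by (simp add: houghton_def embed_perm_comp houghton_carrier_maps_Rn inj_on_ray_shift)
qed

lemma inj_on_houghton_shift: "inj_on (houghton_shift n) (carrier (houghton n))"
proof (rule inj_onI)
  fix \<sigma> \<tau>
  assume "\<sigma> \<in> carrier (houghton n)" "\<tau> \<in> carrier (houghton n)"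
    and eq: "houghton_shift n \<sigma> = houghton_shift n \<tau>"
  then have \<sigma>: "\<sigma> \<in> houghton_carrier n" and \<tau>: "\<tau> \<in> houghton_carrier n"
    by (simp_all add: houghton_def)
  show "\<sigma> = \<tau>"
  proof (rule houghton_carrier_eqI[OF \<sigma> \<tau>])
    show "\<sigma> x = \<tau> x" if "x \<in> Rn n" for x
      using embed_perm_eqD[OF inj_on_ray_shift houghton_carrier_maps_Rn[OF \<sigma>]
          houghton_carrier_maps_Rn[OF \<tau>] eq that] .
  qed
qed

lemma transpose_in_houghton_carrier:
  assumes "a \<in> Rn n" "b \<in> Rn n"
  shows "transpose a b \<in> houghton_carrier n"
proof -
  have "fst (transpose a b (i, k)) = i \<and> int (snd (transpose a b (i, k))) = int k + 0"
    if "Suc (max (snd a) (snd b)) \<le> k" for i k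
    using that by (auto simp: transpose_def)
  moreover have "transpose a b x = x" if "x \<notin> Rn n" for x
    using that assms by (auto simp: transpose_def)
  moreover have "bij_betw (transpose a b) (Rn n) (Rn n)"
    using assms by simp
  ultimately show ?thesis
    unfolding houghton_carrier_def
    by (intro CollectI conjI exI[of _ "Suc (max (snd a) (snd b))"] exI[of _ "\<lambda>_. 0"]) blast+
qed

lemma houghton_shift_not_surj:
  assumes "1 \<le> n"
  shows "houghton_shift n ` carrier (houghton n) \<noteq> carrier (houghton n)"
proof -
  have "(0, 1) \<in> Rn n" "(0, 2) \<in> Rn n"
    using assms by (auto simp: mem_Rn_iff)
  then have "transpose (0, 1) (0, 2) \<in> carrier (houghton n)"
    by (simp add: houghton_def transpose_in_houghton_carrier)
  moreover have "transpose (0, 1) (0, 2) \<noteq> houghton_shift n \<sigma>" for \<sigma>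
  proof -
    have "houghton_shift n \<sigma> (0, 1) = (0, 1)"
      by (rule embed_perm_outside[OF ray_start_notin_ray_shift_Rn])
    moreover have "transpose (0, 1) (0, 2) (0, 1) = (0, 2::nat)"
      by simp
    ultimately show ?thesis
      by (metis Pair_inject numeral_eq_one_iff semiring_norm(85))
  qed
  ultimately show ?thesis
    by blast
qed

theorem mainTheorem10:
  fixes n :: nat
  assumes "n \<ge> 1"
  shows "\<exists>\<phi>. \<phi> \<in> hom (houghton n) (houghton n) \<and> inj_on \<phi> (carrier (houghton n)) \<and>
           \<phi> ` carrier (houghton n) \<noteq> carrier (houghton n)"
  using houghton_shift_hom inj_on_houghton_shift houghton_shift_not_surj[OF assms] by blast

end
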